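(* Let $\alpha\colon\Gamma\curvearrowright X$ be an action of a countable group on a compact, Hausdorff, $0$-dimensional space, and assume there is no $\alpha$-invariant Radon probability measure on $X$. Then $\alpha$ has the dynamical comparison property if and only if $\alpha$ is minimal and $a\le b$ for all nonzero $a,b\in T(\alpha)$.
   Context: Clopen type semigroup: let $Y = X\times\mathbb N$, and let $\tilde\Gamma=\Gamma\times\mathfrak S$ ($\mathfrak S$ the permutation group of $\mathbb N$) act on $Y$ by $(\gamma,\sigma)(x,n)=(\alpha(\gamma)x,\sigma(n))$. A clopen $A\subseteq Y$ is bounded if $A\cap(X\times\{n\})=\emptyset$ for all large $n$. Bounded clopen $A,B$ are equidecomposable if there are clopen $A_1,\dots,A_n$ and $\tilde\gamma_i\in\tilde\Gamma$ with $A=\bigsqcup_i A_i$, $B=\bigsqcup_i\tilde\gamma_iA_i$. $T(\alpha)$ is the set of classes $[A]$, with $[A]+[B]=[A'\sqcup B']$ for disjoint representatives; $0=[\emptyset]$. $a\le b$ iff $b=a+c$ for some $c$. For clopen $A\subseteq X$, $[A]$ denotes $[A\times\{0\}]$. The action $\alpha$ has dynamical comparison if for all nonempty clopen $A,B\subseteq X$ such that $\mu(A)<\mu(B)$ for every $\alpha$-invariant Radon probability measure $\mu$ on $X$, one has $[A]\le[B]$. The action is minimal if every orbit is dense. *)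

theory Defs
  imports "HOL-Probability.Probability" "HOL-Algebra.Group_Action"
begin

text \<open>The space X is the type 'x (a t2_space, assumed compact and zero-dimensional).
  The group Gamma is a HOL-Algebra group G acting via alpha by homeomorphisms.\<close>

definition clopen_set :: "'a::topological_space set \<Rightarrow> bool" where
  "clopen_set A \<longleftrightarrow> open A \<and> closed A"

definition zero_dimensional :: "'a::topological_space itself \<Rightarrow> bool" where
  "zero_dimensional _ \<longleftrightarrow>
     (\<forall>U::'a set. \<forall>x\<in>U. open U \<longrightarrow> (\<exists>C. clopen_set C \<and> x \<in> C \<and> C \<subseteq> U))"

definition continuous_action :: "('g, 'b) monoid_scheme \<Rightarrow> ('g \<Rightarrow> 'x::topological_space \<Rightarrow> 'x) \<Rightarrow> bool" where
  "continuous_action G \<alpha> \<longleftrightarrow> group_action G UNIV \<alpha> \<and> (\<forall>g\<in>carrier G. continuous_on UNIV (\<alpha> g))"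

definition minimal_action :: "('g, 'b) monoid_scheme \<Rightarrow> ('g \<Rightarrow> 'x::topological_space \<Rightarrow> 'x) \<Rightarrow> bool" where
  "minimal_action G \<alpha> \<longleftrightarrow> (\<forall>x. closure ((\<lambda>g. \<alpha> g x) ` carrier G) = UNIV)"

definition radon_prob :: "'x::topological_space measure \<Rightarrow> bool" where
  "radon_prob M \<longleftrightarrow> prob_space M \<and> sets M = sets borel \<and>
     (\<forall>E\<in>sets borel. emeasure M E = (INF U\<in>{U. open U \<and> E \<subseteq> U}. emeasure M U)) \<and>
     (\<forall>U. open U \<longrightarrow> emeasure M U = (SUP K\<in>{K. compact K \<and> K \<subseteq> U}. emeasure M K))"

definition invariant_measure :: "('g, 'b) monoid_scheme \<Rightarrow> ('g \<Rightarrow> 'x::topological_space \<Rightarrow> 'x) \<Rightarrow> 'x measure \<Rightarrow> bool" where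
  "invariant_measure G \<alpha> M \<longleftrightarrow>
     (\<forall>g\<in>carrier G. \<forall>E\<in>sets M. emeasure M (\<alpha> g -` E) = emeasure M E)"

definition inv_radon_prob :: "('g, 'b) monoid_scheme \<Rightarrow> ('g \<Rightarrow> 'x::topological_space \<Rightarrow> 'x) \<Rightarrow> 'x measure \<Rightarrow> bool" where
  "inv_radon_prob G \<alpha> M \<longleftrightarrow> radon_prob M \<and> invariant_measure G \<alpha> M"

text \<open>Y = X \<times> nat (nat discrete); bounded clopen subsets of Y.\<close>
definition bounded_clopen :: "('x::topological_space \<times> nat) set \<Rightarrow> bool" where
  "bounded_clopen A \<longleftrightarrow> clopen_set A \<and> (\<exists>N. \<forall>x n. n \<ge> N \<longrightarrow> (x, n) \<notin> A)"

definition tact :: "('g \<Rightarrow> 'x \<Rightarrow> 'x) \<Rightarrow> 'g \<Rightarrow> (nat \<Rightarrow> nat) \<Rightarrow> 'x \<times> nat \<Rightarrow> 'x \<times> nat" where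
  "tact \<alpha> g \<sigma> = (\<lambda>(x, n). (\<alpha> g x, \<sigma> n))"

definition equidec :: "('g, 'b) monoid_scheme \<Rightarrow> ('g \<Rightarrow> 'x::topological_space \<Rightarrow> 'x)
    \<Rightarrow> ('x \<times> nat) set \<Rightarrow> ('x \<times> nat) set \<Rightarrow> bool" where
  "equidec G \<alpha> A B \<longleftrightarrow> bounded_clopen A \<and> bounded_clopen B \<and>
     (\<exists>(k::nat) (P :: nat \<Rightarrow> ('x \<times> nat) set) (g :: nat \<Rightarrow> 'g) (\<sigma> :: nat \<Rightarrow> nat \<Rightarrow> nat).
        (\<forall>i<k. clopen_set (P i) \<and> g i \<in> carrier G \<and> bij (\<sigma> i)) \<and>
        disjoint_family_on P {..<k} \<and> A = (\<Union>i<k. P i) \<and>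
        disjoint_family_on (\<lambda>i. tact \<alpha> (g i) (\<sigma> i) ` P i) {..<k} \<and>
        B = (\<Union>i<k. tact \<alpha> (g i) (\<sigma> i) ` P i))"

text \<open>Order on T(alpha) in terms of representatives: [A] \<le> [B] iff [B] = [A] + [C] for some
  bounded clopen C, where [A] + [C] = [A' \<union> C'] for disjoint representatives.\<close>
definition type_le :: "('g, 'b) monoid_scheme \<Rightarrow> ('g \<Rightarrow> 'x::topological_space \<Rightarrow> 'x)
    \<Rightarrow> ('x \<times> nat) set \<Rightarrow> ('x \<times> nat) set \<Rightarrow> bool" where
  "type_le G \<alpha> A B \<longleftrightarrow> (\<exists>C A' C'. bounded_clopen C \<and> equidec G \<alpha> A A' \<and> equidec G \<alpha> C C' \<and>
      A' \<inter> C' = {} \<and> equidec G \<alpha> B (A' \<union> C'))"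

text \<open>Element of T(alpha): class of a bounded clopen set; zero is the class of the empty set.\<close>
definition type_zero :: "('g, 'b) monoid_scheme \<Rightarrow> ('g \<Rightarrow> 'x::topological_space \<Rightarrow> 'x)
    \<Rightarrow> ('x \<times> nat) set \<Rightarrow> bool" where
  "type_zero G \<alpha> A \<longleftrightarrow> equidec G \<alpha> A {}"

definition dynamical_comparison :: "('g, 'b) monoid_scheme \<Rightarrow> ('g \<Rightarrow> 'x::topological_space \<Rightarrow> 'x) \<Rightarrow> bool" where
  "dynamical_comparison G \<alpha> \<longleftrightarrow>
     (\<forall>A B :: 'x set. clopen_set A \<and> clopen_set B \<and> A \<noteq> {} \<and> B \<noteq> {} \<and>
        (\<forall>\<mu>. inv_radon_prob G \<alpha> \<mu> \<longrightarrow> measure \<mu> A < measure \<mu> B)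
        \<longrightarrow> type_le G \<alpha> (A \<times> {0}) (B \<times> {0}))"

end

theory Submission
  imports Defs
begin

text \<open>Without invariant measures, dynamical comparison says \<open>[A \<times> {0}] \<le> [B \<times> {0}]\<close> for all
  nonempty clopen \<open>A, B \<subseteq> X\<close>. For \<open>A = X\<close> this sends every point of \<open>X\<close> into every nonempty
  clopen \<open>B\<close> by some group element, which by zero-dimensionality is minimality. \<open>X\<close> is not a
  single point (its Dirac measure would be invariant), so \<open>X = D \<union> -D\<close> with \<open>D, -D\<close> nonempty
  clopen, and comparing \<open>X \<times> {0..<n}\<close> with \<open>D \<times> {0}\<close> and \<open>X \<times> {n}\<close> with \<open>-D \<times> {0}\<close> gives
  \<open>[X \<times> {0..<n}] \<le> [X \<times> {0}]\<close> by induction. A bounded clopen \<open>A\<close> lies in some \<open>X \<times> {0..<n}\<close>,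
  and a nonempty bounded clopen \<open>B\<close> contains a layer \<open>B\<^sub>m \<times> {m}\<close> with
  \<open>[X \<times> {0}] \<le> [B\<^sub>m \<times> {0}]\<close>; hence \<open>[A] \<le> [B]\<close>.\<close>

lemma clopen_set_Int: "clopen_set A \<Longrightarrow> clopen_set B \<Longrightarrow> clopen_set (A \<inter> B)"
  by (auto simp: clopen_set_def)

lemma clopen_set_Diff: "clopen_set A \<Longrightarrow> clopen_set B \<Longrightarrow> clopen_set (A - B)"
  by (auto simp: clopen_set_def)

lemma clopen_set_UNIV [simp]: "clopen_set UNIV"
  by (auto simp: clopen_set_def)

lemma clopen_set_Compl: "clopen_set A \<Longrightarrow> clopen_set (- A)"
  by (auto simp: clopen_set_def)

lemma clopen_set_UN:
  "finite I \<Longrightarrow> (\<And>i. i \<in> I \<Longrightarrow> clopen_set (f i)) \<Longrightarrow> clopen_set (\<Union>i\<in>I. f i)"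
  by (auto simp: clopen_set_def)

lemma clopen_set_vimage: "continuous_on UNIV f \<Longrightarrow> clopen_set A \<Longrightarrow> clopen_set (f -` A)"
  by (auto simp: clopen_set_def intro: open_vimage closed_vimage)

lemma clopen_set_Times: "clopen_set A \<Longrightarrow> clopen_set B \<Longrightarrow> clopen_set (A \<times> B)"
  by (auto simp: clopen_set_def intro: open_Times closed_Times)

lemma clopen_set_finite_nat: "finite (N :: nat set) \<Longrightarrow> clopen_set N"
  by (auto simp: clopen_set_def finite_imp_closed discrete_topology_class.open_discrete)

lemma clopen_set_slice: "clopen_set (B :: ('a::topological_space \<times> nat) set) \<Longrightarrow> clopen_set {x. (x, m) \<in> B}"
  using clopen_set_vimage[of "\<lambda>x. (x, m)" B]
  by (simp add: vimage_def continuous_on_Pair continuous_on_id continuous_on_const)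

lemma bounded_clopen_subset: "bounded_clopen B \<Longrightarrow> A \<subseteq> B \<Longrightarrow> clopen_set A \<Longrightarrow> bounded_clopen A"
  unfolding bounded_clopen_def by blast

lemma bounded_clopen_Un: "bounded_clopen A \<Longrightarrow> bounded_clopen B \<Longrightarrow> bounded_clopen (A \<union> B)"
  unfolding bounded_clopen_def clopen_set_def by (metis Un_iff closed_Un max.bounded_iff open_Un)

lemma bounded_clopen_Diff: "bounded_clopen A \<Longrightarrow> clopen_set B \<Longrightarrow> bounded_clopen (A - B)"
  unfolding bounded_clopen_def by (auto intro: clopen_set_Diff)

lemma bounded_clopen_empty [simp]: "bounded_clopen {}"
  unfolding bounded_clopen_def clopen_set_def by auto

lemma bounded_clopen_Times_lessThan: "clopen_set D \<Longrightarrow> bounded_clopen (D \<times> {..<n})"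
  unfolding bounded_clopen_def by (auto intro!: clopen_set_Times clopen_set_finite_nat exI[of _ n])

lemma bounded_clopen_Times_singleton: "clopen_set D \<Longrightarrow> bounded_clopen (D \<times> {n})"
  unfolding bounded_clopen_def by (auto intro!: clopen_set_Times clopen_set_finite_nat exI[of _ "Suc n"])

lemma bounded_clopen_subset_layers: "bounded_clopen A \<Longrightarrow> \<exists>n. A \<subseteq> UNIV \<times> {..<n}"
  unfolding bounded_clopen_def by (metis SigmaI UNIV_I lessThan_iff not_le subrelI)

lemma disjoint_family_on_image_inj_on:
  assumes "inj_on f A" "disjoint_family_on Q I" "\<And>i. i \<in> I \<Longrightarrow> Q i \<subseteq> A"
  shows "disjoint_family_on (\<lambda>i. f ` Q i) I"
  using assms unfolding disjoint_family_on_def by (metis image_empty inj_on_image_Int)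

lemma inv_radon_prob_return_subsingleton:
  fixes \<alpha> :: "'g \<Rightarrow> 'x::topological_space \<Rightarrow> 'x"
  assumes single: "\<And>x y :: 'x. x = y"
  shows "inv_radon_prob G \<alpha> (return borel x)"
proof -
  define M where "M = return borel x"
  have UNIV_eq: "(UNIV :: 'x set) = {x}"
    using single by blast
  have open_all: "open E" for E :: "'x set"
    using UNIV_eq by (metis open_UNIV open_empty subset_singletonD top_greatest)
  have sets_M: "E \<in> sets M" for E :: "'x set"
    unfolding M_def sets_return using open_all by (rule borel_open)
  have compact_all: "compact E" for E :: "'x set"
    using UNIV_eq by (metis finite.emptyI finite_insert finite_imp_compact finite_subset top_greatest)
  have "radon_prob M"
    unfolding radon_prob_def
  proof (intro conjI ballI allI impI)
    show "prob_space M"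
      unfolding M_def by (rule prob_space_return) simp
    show "sets M = sets borel"
      unfolding M_def by (rule sets_return)
    fix E :: "'x set"
    show "emeasure M E = (INF U\<in>{U. open U \<and> E \<subseteq> U}. emeasure M U)"
      by (rule antisym[OF INF_greatest INF_lower]) (auto intro: emeasure_mono sets_M open_all)
    show "emeasure M E = (SUP K\<in>{K. compact K \<and> K \<subseteq> E}. emeasure M K)"
      by (rule antisym[OF SUP_upper SUP_least]) (auto intro: emeasure_mono sets_M compact_all)
  qed
  moreover have "\<alpha> g z = z" for g z
    using single by blast
  then have "\<alpha> g -` E = E" for g E
    by auto
  then have "invariant_measure G \<alpha> M"
    unfolding invariant_measure_def by simp
  ultimately show ?thesis
    unfolding inv_radon_prob_def M_def by blast
qed

lemma exists_two_points_if_no_inv_radon_prob: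
  fixes \<alpha> :: "'g \<Rightarrow> 'x::topological_space \<Rightarrow> 'x"
  assumes "\<nexists>\<mu>. inv_radon_prob G \<alpha> \<mu>"
  shows "\<exists>x y :: 'x. x \<noteq> y"
proof (rule ccontr)
  assume "\<nexists>x y :: 'x. x \<noteq> y"
  then have "inv_radon_prob G \<alpha> (return borel (undefined :: 'x))"
    by (intro inv_radon_prob_return_subsingleton) blast
  with assms show False
    by blast
qed

lemma exists_proper_clopen:
  assumes "zero_dimensional TYPE('x::t1_space)" and "x \<noteq> (y :: 'x)"
  shows "\<exists>D :: 'x set. clopen_set D \<and> D \<noteq> {} \<and> - D \<noteq> {}"
proof -
  obtain D where "clopen_set D" "x \<in> D" "D \<subseteq> - {y}"
    using assms open_Compl[OF closed_singleton] unfolding zero_dimensional_def by blast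
  then show ?thesis
    by blast
qed

locale clopen_dynamics =
  fixes G :: "('g, 'b) monoid_scheme" and \<alpha> :: "'g \<Rightarrow> 'x::topological_space \<Rightarrow> 'x"
  assumes continuous_action: "continuous_action G \<alpha>"
begin

lemma group_action: "group_action G UNIV \<alpha>"
  using continuous_action unfolding continuous_action_def by blast

lemma continuous_on_act: "g \<in> carrier G \<Longrightarrow> continuous_on UNIV (\<alpha> g)"
  using continuous_action unfolding continuous_action_def by blast

lemma group: "group G"
  using group_action unfolding group_action_def group_hom_def by blast

lemma act_mult: "g \<in> carrier G \<Longrightarrow> h \<in> carrier G \<Longrightarrow> \<alpha> (g \<otimes>\<^bsub>G\<^esub> h) x = \<alpha> g (\<alpha> h x)"
  using group_action.composition_rule[OF group_action] by blast

lemma act_one: "\<alpha> \<one>\<^bsub>G\<^esub> x = x"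
  using group_action.id_eq_one[OF group_action] by (metis restrict_apply' UNIV_I)

lemma act_inv_act: "g \<in> carrier G \<Longrightarrow> \<alpha> (inv\<^bsub>G\<^esub> g) (\<alpha> g x) = x"
  by (metis act_mult act_one group group.inv_closed group.l_inv)

lemma act_act_inv: "g \<in> carrier G \<Longrightarrow> \<alpha> g (\<alpha> (inv\<^bsub>G\<^esub> g) x) = x"
  by (metis act_mult act_one group group.inv_closed group.r_inv)

lemma one_closed: "\<one>\<^bsub>G\<^esub> \<in> carrier G"
  by (rule monoid.one_closed[OF group.is_monoid[OF group]])

lemma inv_closed: "g \<in> carrier G \<Longrightarrow> inv\<^bsub>G\<^esub> g \<in> carrier G"
  using group by (rule group.inv_closed)

lemma mult_closed: "g \<in> carrier G \<Longrightarrow> h \<in> carrier G \<Longrightarrow> g \<otimes>\<^bsub>G\<^esub> h \<in> carrier G"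
  by (rule monoid.m_closed[OF group.is_monoid[OF group]])

lemma continuous_on_tact: "g \<in> carrier G \<Longrightarrow> continuous_on UNIV (tact \<alpha> g \<sigma>)"
proof -
  assume g: "g \<in> carrier G"
  have "continuous_on UNIV (\<lambda>p :: 'x \<times> nat. \<alpha> g (fst p))"
    by (rule continuous_on_compose2[OF continuous_on_act[OF g] continuous_on_fst])
      (auto intro: continuous_on_id)
  moreover have "continuous_on UNIV (\<lambda>p :: 'x \<times> nat. \<sigma> (snd p))"
    by (rule continuous_on_compose2[OF Topological_Spaces.continuous_on_discrete continuous_on_snd])
      (auto intro: continuous_on_id)
  ultimately show ?thesis
    unfolding tact_def case_prod_beta by (rule continuous_on_Pair)
qed

lemma tact_inv_tact:
  "g \<in> carrier G \<Longrightarrow> bij \<sigma> \<Longrightarrow> tact \<alpha> (inv\<^bsub>G\<^esub> g) (inv_into UNIV \<sigma>) (tact \<alpha> g \<sigma> p) = p"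
  by (cases p) (auto simp: tact_def act_inv_act bij_def)

lemma tact_tact_inv:
  "g \<in> carrier G \<Longrightarrow> bij \<sigma> \<Longrightarrow> tact \<alpha> g \<sigma> (tact \<alpha> (inv\<^bsub>G\<^esub> g) (inv_into UNIV \<sigma>) p) = p"
  by (cases p) (auto simp: tact_def act_act_inv bij_def surj_f_inv_f)

lemma tact_tact:
  "g \<in> carrier G \<Longrightarrow> h \<in> carrier G \<Longrightarrow> tact \<alpha> h \<tau> (tact \<alpha> g \<sigma> p) = tact \<alpha> (h \<otimes>\<^bsub>G\<^esub> g) (\<tau> \<circ> \<sigma>) p"
  by (cases p) (auto simp: tact_def act_mult)

lemma tact_one: "tact \<alpha> \<one>\<^bsub>G\<^esub> \<sigma> (x, n) = (x, \<sigma> n)"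
  by (simp add: tact_def act_one)

lemma inj_tact: "g \<in> carrier G \<Longrightarrow> bij \<sigma> \<Longrightarrow> inj (tact \<alpha> g \<sigma>)"
  by (metis injI tact_inv_tact)

lemma clopen_set_tact_vimage: "g \<in> carrier G \<Longrightarrow> clopen_set P \<Longrightarrow> clopen_set (tact \<alpha> g \<sigma> -` P)"
  by (simp add: clopen_set_vimage continuous_on_tact)

lemma clopen_set_tact_image:
  assumes "g \<in> carrier G" "bij \<sigma>" "clopen_set P"
  shows "clopen_set (tact \<alpha> g \<sigma> ` P)"
proof -
  have "tact \<alpha> g \<sigma> ` P = tact \<alpha> (inv\<^bsub>G\<^esub> g) (inv_into UNIV \<sigma>) -` P"
    using assms(1,2) by (auto simp: tact_inv_tact) (metis image_eqI tact_tact_inv)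
  then show ?thesis
    using assms by (simp add: clopen_set_tact_vimage inv_closed)
qed

subsection \<open>Piecewise equivalence\<close>

text \<open>Unlike in \<^const>\<open>equidec\<close>, the pieces of the cover \<open>S\<close> may overlap; this makes such
  piecewise maps easy to compose, invert and restrict.\<close>

definition tact_cover ::
    "('x \<times> nat) set \<Rightarrow> ('x \<times> nat \<Rightarrow> 'x \<times> nat) \<Rightarrow> (('x \<times> nat) set \<times> 'g \<times> (nat \<Rightarrow> nat)) set \<Rightarrow> bool"
  where "tact_cover A \<phi> S \<longleftrightarrow> finite S \<and> A \<subseteq> \<Union>(fst ` S) \<and>
     (\<forall>(P, g, \<sigma>)\<in>S. clopen_set P \<and> g \<in> carrier G \<and> bij \<sigma> \<and> (\<forall>p\<in>P \<inter> A. \<phi> p = tact \<alpha> g \<sigma> p))"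

definition piecewise_equiv :: "('x \<times> nat) set \<Rightarrow> ('x \<times> nat) set \<Rightarrow> bool" where
  "piecewise_equiv A B \<longleftrightarrow> bounded_clopen A \<and> bounded_clopen B \<and>
     (\<exists>\<phi> S. bij_betw \<phi> A B \<and> tact_cover A \<phi> S)"

lemma tact_coverD:
  "tact_cover A \<phi> S \<Longrightarrow> (P, g, \<sigma>) \<in> S \<Longrightarrow>
     clopen_set P \<and> g \<in> carrier G \<and> bij \<sigma> \<and> (\<forall>p\<in>P \<inter> A. \<phi> p = tact \<alpha> g \<sigma> p)"
  unfolding tact_cover_def by blast

lemma tact_cover_covers: "tact_cover A \<phi> S \<Longrightarrow> p \<in> A \<Longrightarrow> \<exists>P g \<sigma>. (P, g, \<sigma>) \<in> S \<and> p \<in> P"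
  unfolding tact_cover_def by force

lemma tact_cover_mono: "tact_cover A \<phi> S \<Longrightarrow> A' \<subseteq> A \<Longrightarrow> tact_cover A' \<phi> S"
  unfolding tact_cover_def by blast

lemma tact_cover_image:
  assumes "tact_cover A \<phi> S" "A' \<subseteq> A"
  shows "\<phi> ` A' = (\<Union>(P, g, \<sigma>)\<in>S. tact \<alpha> g \<sigma> ` (P \<inter> A'))"
proof (intro equalityI subsetI)
  fix q assume "q \<in> \<phi> ` A'"
  then obtain p where p: "p \<in> A'" "q = \<phi> p"
    by blast
  then obtain P g \<sigma> where t: "(P, g, \<sigma>) \<in> S" "p \<in> P"
    using assms tact_cover_covers by blast
  then have "q = tact \<alpha> g \<sigma> p"
    using tact_coverD[OF assms(1) t(1)] assms(2) p by blast
  then show "q \<in> (\<Union>(P, g, \<sigma>)\<in>S. tact \<alpha> g \<sigma> ` (P \<inter> A'))"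
    using t p by blast
next
  fix q assume "q \<in> (\<Union>(P, g, \<sigma>)\<in>S. tact \<alpha> g \<sigma> ` (P \<inter> A'))"
  then obtain P g \<sigma> p where t: "(P, g, \<sigma>) \<in> S" "p \<in> P \<inter> A'" "q = tact \<alpha> g \<sigma> p"
    by blast
  then have "q = \<phi> p"
    using tact_coverD[OF assms(1) t(1)] assms(2) by auto
  then show "q \<in> \<phi> ` A'"
    using t by blast
qed

lemma clopen_set_tact_cover_image:
  assumes "tact_cover A \<phi> S" "A' \<subseteq> A" "clopen_set A'"
  shows "clopen_set (\<phi> ` A')"
  unfolding tact_cover_image[OF assms(1,2)]
  using assms(1,3) unfolding tact_cover_def
  by (intro clopen_set_UN) (auto intro!: clopen_set_tact_image clopen_set_Int)

lemma piecewise_equiv_clopen_set: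
  assumes "piecewise_equiv A B"
  shows "clopen_set A" "clopen_set B"
  using assms unfolding piecewise_equiv_def bounded_clopen_def by blast+

lemma piecewise_equiv_refl: "bounded_clopen A \<Longrightarrow> piecewise_equiv A A"
  unfolding piecewise_equiv_def tact_cover_def
  by (intro conjI exI[of _ id] exI[of _ "{(UNIV, \<one>\<^bsub>G\<^esub>, id)}"])
    (auto simp: tact_one one_closed)

lemma piecewise_equiv_restrict:
  assumes "piecewise_equiv A B" "A' \<subseteq> A" "clopen_set A'"
  shows "\<exists>B' \<subseteq> B. piecewise_equiv A' B'"
proof -
  obtain \<phi> S where b: "bij_betw \<phi> A B" and c: "tact_cover A \<phi> S"
    and bA: "bounded_clopen A" and bB: "bounded_clopen B"
    using assms(1) unfolding piecewise_equiv_def by blast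
  have "\<phi> ` A' \<subseteq> B"
    using b assms(2) by (auto simp: bij_betw_def)
  moreover have "piecewise_equiv A' (\<phi> ` A')"
    unfolding piecewise_equiv_def
  proof (intro conjI exI)
    show "bounded_clopen A'"
      using bA assms(2,3) by (rule bounded_clopen_subset)
    show "bounded_clopen (\<phi> ` A')"
      using bB \<open>\<phi> ` A' \<subseteq> B\<close> clopen_set_tact_cover_image[OF c assms(2,3)] by (rule bounded_clopen_subset)
    show "bij_betw \<phi> A' (\<phi> ` A')"
      using b assms(2) by (meson bij_betw_def bij_betw_subset)
    show "tact_cover A' \<phi> S"
      using c assms(2) by (rule tact_cover_mono)
  qed
  ultimately show ?thesis
    by blast
qed

lemma tact_cover_inv_into:
  assumes b: "bij_betw \<phi> A B" and c: "tact_cover A \<phi> S" and "clopen_set A"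
  shows "\<exists>S'. tact_cover B (inv_into A \<phi>) S'"
proof -
  define flip where "flip = (\<lambda>(P, g, \<sigma>). (tact \<alpha> g \<sigma> ` (P \<inter> A), inv\<^bsub>G\<^esub> g, inv_into UNIV \<sigma>))"
  have "tact_cover B (inv_into A \<phi>) (flip ` S)"
    unfolding tact_cover_def
  proof (intro conjI)
    show "finite (flip ` S)"
      using c unfolding tact_cover_def by blast
    show "B \<subseteq> \<Union> (fst ` flip ` S)"
    proof
      fix q assume "q \<in> B"
      then obtain p where p: "p \<in> A" "q = \<phi> p"
        using b by (auto simp: bij_betw_def)
      then obtain P g \<sigma> where t: "(P, g, \<sigma>) \<in> S" "p \<in> P"
        using c tact_cover_covers by blast
      then have "q \<in> fst (flip (P, g, \<sigma>))"
        using tact_coverD[OF c t(1)] p by (auto simp: flip_def)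
      then show "q \<in> \<Union> (fst ` flip ` S)"
        using t(1) by blast
    qed
    show "\<forall>(P', h, \<tau>)\<in>flip ` S. clopen_set P' \<and> h \<in> carrier G \<and> bij \<tau> \<and>
        (\<forall>q\<in>P' \<inter> B. inv_into A \<phi> q = tact \<alpha> h \<tau> q)"
    proof (clarsimp simp: flip_def)
      fix P g \<sigma> assume "(P, g, \<sigma>) \<in> S"
      then have g: "g \<in> carrier G" "bij \<sigma>" "clopen_set P" and eq: "\<forall>p\<in>P \<inter> A. \<phi> p = tact \<alpha> g \<sigma> p"
        using tact_coverD[OF c] by blast+
      have "inv_into A \<phi> (tact \<alpha> g \<sigma> p) = tact \<alpha> (inv\<^bsub>G\<^esub> g) (inv_into UNIV \<sigma>) (tact \<alpha> g \<sigma> p)"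
        if "p \<in> P" "p \<in> A" for p
        using that eq b g by (metis IntI bij_betw_inv_into_left tact_inv_tact)
      with \<open>clopen_set A\<close> show "clopen_set (tact \<alpha> g \<sigma> ` (P \<inter> A)) \<and> inv\<^bsub>G\<^esub> g \<in> carrier G \<and> bij (inv_into UNIV \<sigma>) \<and>
          (\<forall>q\<in>tact \<alpha> g \<sigma> ` (P \<inter> A) \<inter> B. inv_into A \<phi> q = tact \<alpha> (inv\<^bsub>G\<^esub> g) (inv_into UNIV \<sigma>) q)"
        using g by (auto intro!: clopen_set_tact_image clopen_set_Int inv_closed bij_imp_bij_inv)
    qed
  qed
  then show ?thesis
    by blast
qed

lemma piecewise_equiv_sym:
  assumes "piecewise_equiv A B"
  shows "piecewise_equiv B A"
proof -
  obtain \<phi> S where b: "bij_betw \<phi> A B" and c: "tact_cover A \<phi> S"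
    and bounded: "bounded_clopen A" "bounded_clopen B"
    using assms unfolding piecewise_equiv_def by blast
  obtain S' where "tact_cover B (inv_into A \<phi>) S'"
    using tact_cover_inv_into[OF b c] bounded(1) unfolding bounded_clopen_def by blast
  then show ?thesis
    unfolding piecewise_equiv_def using bounded bij_betw_inv_into[OF b] by blast
qed

lemma tact_cover_comp:
  assumes c1: "tact_cover A \<phi> S" and c2: "tact_cover B \<psi> T" and image: "\<phi> ` A \<subseteq> B"
  shows "\<exists>U. tact_cover A (\<psi> \<circ> \<phi>) U"
proof -
  define compose where "compose = (\<lambda>((P, g, \<sigma>), (Q, h, \<tau> :: nat \<Rightarrow> nat)). (P \<inter> tact \<alpha> g \<sigma> -` Q, h \<otimes>\<^bsub>G\<^esub> g, \<tau> \<circ> \<sigma>))"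
  have "tact_cover A (\<psi> \<circ> \<phi>) (compose ` (S \<times> T))"
    unfolding tact_cover_def
  proof (intro conjI)
    show "finite (compose ` (S \<times> T))"
      using c1 c2 unfolding tact_cover_def by blast
    show "A \<subseteq> \<Union> (fst ` compose ` (S \<times> T))"
    proof
      fix p assume p: "p \<in> A"
      then obtain P g \<sigma> where t: "(P, g, \<sigma>) \<in> S" "p \<in> P"
        using c1 tact_cover_covers by blast
      then have e: "\<phi> p = tact \<alpha> g \<sigma> p"
        using tact_coverD[OF c1] p by blast
      have "\<phi> p \<in> B"
        using image p by blast
      then obtain Q h \<tau> where u: "(Q, h, \<tau>) \<in> T" "\<phi> p \<in> Q"
        using c2 tact_cover_covers by blast
      have "p \<in> fst (compose ((P, g, \<sigma>), (Q, h, \<tau>)))"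
        using t u e by (simp add: compose_def)
      then show "p \<in> \<Union> (fst ` compose ` (S \<times> T))"
        using t u by blast
    qed
    show "\<forall>(P', h', \<tau>')\<in>compose ` (S \<times> T). clopen_set P' \<and> h' \<in> carrier G \<and> bij \<tau>' \<and>
        (\<forall>p\<in>P' \<inter> A. (\<psi> \<circ> \<phi>) p = tact \<alpha> h' \<tau>' p)"
    proof (clarsimp simp: compose_def)
      fix P g \<sigma> Q h \<tau> assume t: "(P, g, \<sigma>) \<in> S" and u: "(Q, h, \<tau>) \<in> T"
      have g: "g \<in> carrier G" "bij \<sigma>" "clopen_set P" and eq1: "\<forall>p\<in>P \<inter> A. \<phi> p = tact \<alpha> g \<sigma> p"
        using tact_coverD[OF c1 t] by blast+
      have h: "h \<in> carrier G" "bij \<tau>" "clopen_set Q" and eq2: "\<forall>q\<in>Q \<inter> B. \<psi> q = tact \<alpha> h \<tau> q"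
        using tact_coverD[OF c2 u] by blast+
      have "\<psi> (\<phi> p) = tact \<alpha> (h \<otimes>\<^bsub>G\<^esub> g) (\<tau> \<circ> \<sigma>) p" if "p \<in> P" "tact \<alpha> g \<sigma> p \<in> Q" "p \<in> A" for p
      proof -
        have "\<phi> p = tact \<alpha> g \<sigma> p" "\<phi> p \<in> B"
          using that eq1 image by auto
        then show ?thesis
          using that eq2 g h by (simp add: tact_tact)
      qed
      then show "clopen_set (P \<inter> tact \<alpha> g \<sigma> -` Q) \<and> h \<otimes>\<^bsub>G\<^esub> g \<in> carrier G \<and> bij (\<tau> \<circ> \<sigma>) \<and>
         (\<forall>p\<in>P \<inter> tact \<alpha> g \<sigma> -` Q \<inter> A. \<psi> (\<phi> p) = tact \<alpha> (h \<otimes>\<^bsub>G\<^esub> g) (\<tau> \<circ> \<sigma>) p)"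
        using g h by (auto intro!: clopen_set_Int clopen_set_tact_vimage mult_closed bij_comp)
    qed
  qed
  then show ?thesis
    by blast
qed

lemma piecewise_equiv_trans:
  assumes "piecewise_equiv A B" "piecewise_equiv B C"
  shows "piecewise_equiv A C"
proof -
  obtain \<phi> S \<psi> T where b1: "bij_betw \<phi> A B" and c1: "tact_cover A \<phi> S"
    and b2: "bij_betw \<psi> B C" and c2: "tact_cover B \<psi> T"
    using assms unfolding piecewise_equiv_def by blast
  have "\<exists>U. tact_cover A (\<psi> \<circ> \<phi>) U"
    using tact_cover_comp[OF c1 c2] b1 by (simp add: bij_betw_def)
  then show ?thesis
    using assms bij_betw_trans[OF b1 b2] unfolding piecewise_equiv_def by blast
qed

lemma tact_cover_Int_pieces:
  assumes "tact_cover A \<phi> S" "clopen_set A" "\<And>p. p \<in> A \<Longrightarrow> \<psi> p = \<phi> p"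
  shows "tact_cover A \<psi> ((\<lambda>(P, g, \<sigma>). (P \<inter> A, g, \<sigma>)) ` S)"
  unfolding tact_cover_def
proof (intro conjI)
  show "finite ((\<lambda>(P, g, \<sigma>). (P \<inter> A, g, \<sigma>)) ` S)"
    using assms(1) unfolding tact_cover_def by blast
  show "A \<subseteq> \<Union> (fst ` (\<lambda>(P, g, \<sigma>). (P \<inter> A, g, \<sigma>)) ` S)"
    using tact_cover_covers[OF assms(1)] by force
  show "\<forall>(P', g, \<sigma>)\<in>(\<lambda>(P, g, \<sigma>). (P \<inter> A, g, \<sigma>)) ` S.
      clopen_set P' \<and> g \<in> carrier G \<and> bij \<sigma> \<and> (\<forall>p\<in>P' \<inter> A. \<psi> p = tact \<alpha> g \<sigma> p)"
    using tact_coverD[OF assms(1)] assms(2,3) by (auto intro: clopen_set_Int)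
qed

lemma tact_cover_Un:
  assumes "tact_cover A \<phi> S" "tact_cover B \<phi> T" "\<forall>t\<in>S. fst t \<subseteq> A" "\<forall>t\<in>T. fst t \<subseteq> B"
  shows "tact_cover (A \<union> B) \<phi> (S \<union> T)"
  unfolding tact_cover_def
proof (intro conjI)
  show "finite (S \<union> T)" "A \<union> B \<subseteq> \<Union> (fst ` (S \<union> T))"
    using assms(1,2) unfolding tact_cover_def by blast+
  show "\<forall>(P, g, \<sigma>)\<in>S \<union> T. clopen_set P \<and> g \<in> carrier G \<and> bij \<sigma> \<and>
      (\<forall>p\<in>P \<inter> (A \<union> B). \<phi> p = tact \<alpha> g \<sigma> p)"
  proof (clarify)
    fix P g \<sigma> assume "(P, g, \<sigma>) \<in> S \<union> T"
    then consider "(P, g, \<sigma>) \<in> S" "P \<subseteq> A" | "(P, g, \<sigma>) \<in> T" "P \<subseteq> B"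
      using assms(3,4) by (metis Un_iff fst_conv)
    then show "clopen_set P \<and> g \<in> carrier G \<and> bij \<sigma> \<and> (\<forall>p\<in>P \<inter> (A \<union> B). \<phi> p = tact \<alpha> g \<sigma> p)"
      by cases (use tact_coverD[OF assms(1)] tact_coverD[OF assms(2)] in blast)+
  qed
qed

lemma piecewise_equiv_Un:
  assumes "piecewise_equiv A1 B1" "piecewise_equiv A2 B2" "A1 \<inter> A2 = {}" "B1 \<inter> B2 = {}"
  shows "piecewise_equiv (A1 \<union> A2) (B1 \<union> B2)"
proof -
  obtain \<phi> S \<psi> T where b1: "bij_betw \<phi> A1 B1" and c1: "tact_cover A1 \<phi> S"
    and b2: "bij_betw \<psi> A2 B2" and c2: "tact_cover A2 \<psi> T"
    and bounded: "bounded_clopen A1" "bounded_clopen A2" "bounded_clopen B1" "bounded_clopen B2"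
    using assms(1,2) unfolding piecewise_equiv_def by blast
  define glued where "glued p = (if p \<in> A1 then \<phi> p else \<psi> p)" for p
  have "tact_cover A1 glued ((\<lambda>(P, g, \<sigma>). (P \<inter> A1, g, \<sigma>)) ` S)"
    by (rule tact_cover_Int_pieces[OF c1]) (use bounded(1) in \<open>auto simp: glued_def bounded_clopen_def\<close>)
  moreover have "tact_cover A2 glued ((\<lambda>(P, g, \<sigma>). (P \<inter> A2, g, \<sigma>)) ` T)"
    by (rule tact_cover_Int_pieces[OF c2])
      (use bounded(2) assms(3) in \<open>auto simp: glued_def bounded_clopen_def\<close>)
  ultimately have "tact_cover (A1 \<union> A2) glued
      ((\<lambda>(P, g, \<sigma>). (P \<inter> A1, g, \<sigma>)) ` S \<union> (\<lambda>(P, g, \<sigma>). (P \<inter> A2, g, \<sigma>)) ` T)"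
    by (rule tact_cover_Un) auto
  moreover have "bij_betw glued (A1 \<union> A2) (B1 \<union> B2)"
  proof (rule bij_betw_combine)
    show "bij_betw glued A1 B1"
      using b1 by (rule bij_betw_cong[THEN iffD1, rotated]) (simp add: glued_def)
    show "bij_betw glued A2 B2"
      using b2 assms(3) by (intro bij_betw_cong[THEN iffD1, OF _ b2]) (auto simp: glued_def)
  qed (rule assms(4))
  ultimately show ?thesis
    unfolding piecewise_equiv_def using bounded bounded_clopen_Un by blast
qed

lemma piecewise_equiv_swap_layers:
  assumes "clopen_set D"
  shows "piecewise_equiv (D \<times> {m}) (D \<times> {n})"
proof -
  let ?\<sigma> = "Transposition.transpose m n"
  have "inj (tact \<alpha> \<one>\<^bsub>G\<^esub> ?\<sigma>)"
    by (rule inj_tact[OF one_closed bij_transpose])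
  moreover have "tact \<alpha> \<one>\<^bsub>G\<^esub> ?\<sigma> ` (D \<times> {m}) = D \<times> {n}"
    by (auto simp: tact_one image_iff)
  ultimately have "bij_betw (tact \<alpha> \<one>\<^bsub>G\<^esub> ?\<sigma>) (D \<times> {m}) (D \<times> {n})"
    unfolding bij_betw_def by (blast intro: inj_on_subset)
  moreover have "tact_cover (D \<times> {m}) (tact \<alpha> \<one>\<^bsub>G\<^esub> ?\<sigma>) {(UNIV, \<one>\<^bsub>G\<^esub>, ?\<sigma>)}"
    unfolding tact_cover_def using one_closed bij_transpose by auto
  ultimately show ?thesis
    unfolding piecewise_equiv_def using bounded_clopen_Times_singleton[OF assms] by blast
qed

lemma equidec_imp_piecewise_equiv:
  assumes "equidec G \<alpha> A B"
  shows "piecewise_equiv A B"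
proof -
  obtain k :: nat and P :: "nat \<Rightarrow> ('x \<times> nat) set" and g :: "nat \<Rightarrow> 'g" and \<sigma> :: "nat \<Rightarrow> nat \<Rightarrow> nat"
    where pieces: "\<forall>i<k. clopen_set (P i) \<and> g i \<in> carrier G \<and> bij (\<sigma> i)"
    and disj: "disjoint_family_on P {..<k}" and A: "A = (\<Union>i<k. P i)"
    and disj': "disjoint_family_on (\<lambda>i. tact \<alpha> (g i) (\<sigma> i) ` P i) {..<k}"
    and B: "B = (\<Union>i<k. tact \<alpha> (g i) (\<sigma> i) ` P i)"
    and bounded: "bounded_clopen A" "bounded_clopen B"
    using assms unfolding equidec_def by blast
  define idx where "idx p = (SOME i. i < k \<and> p \<in> P i)" for p
  define \<phi> where "\<phi> p = tact \<alpha> (g (idx p)) (\<sigma> (idx p)) p" for p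
  have \<phi>: "\<phi> p = tact \<alpha> (g i) (\<sigma> i) p" if "i < k" "p \<in> P i" for i p
  proof -
    have "idx p < k \<and> p \<in> P (idx p)"
      unfolding idx_def by (rule someI[of _ i]) (use that in blast)
    then have "idx p = i"
      using disj that unfolding disjoint_family_on_def by blast
    then show ?thesis
      by (simp add: \<phi>_def)
  qed
  have "tact_cover A \<phi> ((\<lambda>i. (P i, g i, \<sigma> i)) ` {..<k})"
    unfolding tact_cover_def A using pieces \<phi> by fastforce
  moreover have "inj_on \<phi> A"
  proof (rule inj_onI)
    fix p q assume "p \<in> A" "q \<in> A" and e: "\<phi> p = \<phi> q"
    then obtain i j where ij: "i < k" "p \<in> P i" "j < k" "q \<in> P j"
      unfolding A by auto
    then have "i = j"
      using e \<phi> disj' unfolding disjoint_family_on_def by (metis disjoint_iff image_eqI lessThan_iff)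
    then show "p = q"
      using e \<phi> ij pieces inj_tact by (metis injD)
  qed
  moreover have "\<phi> ` A = B"
    unfolding A B using \<phi> by (auto simp: image_UN intro!: SUP_cong image_cong)
  ultimately show ?thesis
    unfolding piecewise_equiv_def bij_betw_def using bounded by blast
qed

lemma piecewise_equiv_imp_equidec:
  assumes "piecewise_equiv A B"
  shows "equidec G \<alpha> A B"
proof -
  obtain \<phi> S where b: "bij_betw \<phi> A B" and c: "tact_cover A \<phi> S"
    and bA: "bounded_clopen A" and bB: "bounded_clopen B"
    using assms unfolding piecewise_equiv_def by blast
  obtain n :: nat and f where S: "S = f ` {..<n}"
    using c unfolding tact_cover_def by (metis finite_imp_nat_seg_image_inj_on lessThan_def)
  define P where "P i = fst (f i)" for i
  define g where "g i = fst (snd (f i))" for i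
  define \<sigma> where "\<sigma> i = snd (snd (f i))" for i
  have piece: "clopen_set (P i) \<and> g i \<in> carrier G \<and> bij (\<sigma> i) \<and> (\<forall>p\<in>P i \<inter> A. \<phi> p = tact \<alpha> (g i) (\<sigma> i) p)"
    if "i < n" for i
    using tact_coverD[OF c, of "P i" "g i" "\<sigma> i"] S that by (simp add: P_def g_def \<sigma>_def)
  define Q where "Q = disjointed (\<lambda>i. P i \<inter> A)"
  have Q_sub: "Q i \<subseteq> P i \<inter> A" for i
    using disjointed_subset unfolding Q_def by metis
  have clopen_Q: "clopen_set (Q i)" if "i < n" for i
    using piece that bA unfolding Q_def disjointed_def bounded_clopen_def
    by (intro clopen_set_Diff clopen_set_Int clopen_set_UN) auto
  have disj: "disjoint_family_on Q {..<n}"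
    unfolding Q_def using disjoint_family_disjointed by (rule disjoint_family_on_mono[rotated]) simp
  have "A \<subseteq> (\<Union>i<n. P i)"
    using c S unfolding tact_cover_def P_def by auto
  then have A: "A = (\<Union>i<n. Q i)"
    using finite_UN_disjointed_eq[of "\<lambda>i. P i \<inter> A" n] unfolding Q_def atLeast0LessThan by blast
  have image_Q: "tact \<alpha> (g i) (\<sigma> i) ` Q i = \<phi> ` Q i" if "i < n" for i
  proof (rule image_cong[OF refl])
    fix p assume "p \<in> Q i"
    then have "p \<in> P i \<inter> A"
      using Q_sub[of i] by blast
    then show "tact \<alpha> (g i) (\<sigma> i) p = \<phi> p"
      using piece[OF that] by simp
  qed
  have "disjoint_family_on (\<lambda>i. \<phi> ` Q i) {..<n}"
    using b disj Q_sub unfolding bij_betw_def by (blast intro: disjoint_family_on_image_inj_on)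
  then have disj': "disjoint_family_on (\<lambda>i. tact \<alpha> (g i) (\<sigma> i) ` Q i) {..<n}"
    using image_Q by (simp add: disjoint_family_on_def)
  have "B = (\<Union>i<n. tact \<alpha> (g i) (\<sigma> i) ` Q i)"
    using b A image_Q unfolding bij_betw_def by (simp add: image_UN)
  then show ?thesis
    unfolding equidec_def using bA bB piece clopen_Q disj A disj'
    by (intro conjI exI[of _ n] exI[of _ Q] exI[of _ g] exI[of _ \<sigma>]) auto
qed

lemma equidec_iff_piecewise_equiv: "equidec G \<alpha> A B \<longleftrightarrow> piecewise_equiv A B"
  using equidec_imp_piecewise_equiv piecewise_equiv_imp_equidec by blast

lemma type_zero_iff_empty: "type_zero G \<alpha> A \<longleftrightarrow> A = {}"
proof
  assume "type_zero G \<alpha> A"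
  then obtain \<phi> :: "'x \<times> nat \<Rightarrow> 'x \<times> nat" where "bij_betw \<phi> A {}"
    unfolding type_zero_def equidec_iff_piecewise_equiv piecewise_equiv_def by blast
  then show "A = {}"
    by (simp add: bij_betw_def)
qed (simp add: type_zero_def equidec_iff_piecewise_equiv piecewise_equiv_refl)

subsection \<open>The order on the type semigroup\<close>

definition subequiv :: "('x \<times> nat) set \<Rightarrow> ('x \<times> nat) set \<Rightarrow> bool" where
  "subequiv A B \<longleftrightarrow> bounded_clopen B \<and> (\<exists>B' \<subseteq> B. piecewise_equiv A B')"

lemma piecewise_equiv_imp_subequiv: "piecewise_equiv A B \<Longrightarrow> subequiv A B"
  unfolding subequiv_def piecewise_equiv_def by blast

lemma subset_imp_subequiv: "bounded_clopen B \<Longrightarrow> A \<subseteq> B \<Longrightarrow> clopen_set A \<Longrightarrow> subequiv A B"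
  unfolding subequiv_def using piecewise_equiv_refl bounded_clopen_subset by blast

lemma subequiv_trans [trans]:
  assumes "subequiv A B" "subequiv B C"
  shows "subequiv A C"
proof -
  obtain B' where B': "B' \<subseteq> B" "piecewise_equiv A B'"
    using assms(1) unfolding subequiv_def by blast
  obtain C' where C': "C' \<subseteq> C" "piecewise_equiv B C'" and bC: "bounded_clopen C"
    using assms(2) unfolding subequiv_def by blast
  obtain C'' where "C'' \<subseteq> C'" "piecewise_equiv B' C''"
    using piecewise_equiv_restrict[OF C'(2) B'(1) piecewise_equiv_clopen_set(2)[OF B'(2)]] by blast
  then show ?thesis
    unfolding subequiv_def using bC C'(1) piecewise_equiv_trans[OF B'(2)] by blast
qed

lemma subequiv_Un:
  assumes "subequiv A1 B1" "subequiv A2 B2" "A1 \<inter> A2 = {}" "B1 \<inter> B2 = {}"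
  shows "subequiv (A1 \<union> A2) (B1 \<union> B2)"
proof -
  obtain C1 C2 where C: "C1 \<subseteq> B1" "piecewise_equiv A1 C1" "C2 \<subseteq> B2" "piecewise_equiv A2 C2"
    and bounded: "bounded_clopen B1" "bounded_clopen B2"
    using assms(1,2) unfolding subequiv_def by blast
  have "C1 \<inter> C2 = {}"
    using C(1,3) assms(4) by blast
  then have "piecewise_equiv (A1 \<union> A2) (C1 \<union> C2)"
    using piecewise_equiv_Un[OF C(2,4) assms(3)] by blast
  moreover have "C1 \<union> C2 \<subseteq> B1 \<union> B2"
    using C(1,3) by blast
  ultimately show ?thesis
    unfolding subequiv_def using bounded_clopen_Un[OF bounded] by blast
qed

lemma type_le_iff_subequiv: "type_le G \<alpha> A B \<longleftrightarrow> subequiv A B"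
proof
  assume "type_le G \<alpha> A B"
  then obtain A' C' where AA': "piecewise_equiv A A'" and B: "piecewise_equiv B (A' \<union> C')"
    unfolding type_le_def equidec_iff_piecewise_equiv by blast
  obtain B' where "B' \<subseteq> B" "piecewise_equiv A' B'"
    using piecewise_equiv_restrict[OF piecewise_equiv_sym[OF B] _ piecewise_equiv_clopen_set(2)[OF AA']]
    by blast
  then show "subequiv A B"
    unfolding subequiv_def using B piecewise_equiv_trans[OF AA'] unfolding piecewise_equiv_def[of B] by blast
next
  assume "subequiv A B"
  then obtain B' where B': "B' \<subseteq> B" "piecewise_equiv A B'" and bB: "bounded_clopen B"
    unfolding subequiv_def by blast
  have "bounded_clopen (B - B')"
    using bB piecewise_equiv_clopen_set(2)[OF B'(2)] by (rule bounded_clopen_Diff)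
  moreover have "B = B' \<union> (B - B')" "B' \<inter> (B - B') = {}"
    using B'(1) by blast+
  ultimately show "type_le G \<alpha> A B"
    unfolding type_le_def equidec_iff_piecewise_equiv
    using B'(2) bB piecewise_equiv_refl by metis
qed

text \<open>This is what \<^const>\<open>dynamical_comparison\<close> says when there are no invariant measures.\<close>

definition layer_comparison :: bool where
  "layer_comparison \<longleftrightarrow>
     (\<forall>A B. clopen_set A \<and> clopen_set B \<and> A \<noteq> {} \<and> B \<noteq> {} \<longrightarrow> subequiv (A \<times> {0}) (B \<times> {0}))"

lemma layer_comparisonD:
  "layer_comparison \<Longrightarrow> clopen_set A \<Longrightarrow> clopen_set B \<Longrightarrow> A \<noteq> {} \<Longrightarrow> B \<noteq> {} \<Longrightarrow>
     subequiv (A \<times> {0}) (B \<times> {0})"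
  unfolding layer_comparison_def by blast

lemma minimal_if_layer_comparison:
  assumes zero_dim: "zero_dimensional TYPE('x)" and cmp: layer_comparison
  shows "minimal_action G \<alpha>"
  unfolding minimal_action_def
proof (rule allI, rule ccontr)
  fix x :: 'x
  let ?orbit = "(\<lambda>g. \<alpha> g x) ` carrier G"
  assume "closure ?orbit \<noteq> UNIV"
  then obtain y where "y \<in> - closure ?orbit"
    by blast
  moreover have "open (- closure ?orbit)"
    by (rule open_Compl[OF closed_closure])
  ultimately obtain B where B: "clopen_set B" "y \<in> B" "B \<subseteq> - closure ?orbit"
    using zero_dim unfolding zero_dimensional_def by blast
  then obtain B' \<phi> S where \<phi>: "B' \<subseteq> B \<times> {0}" "bij_betw \<phi> (UNIV \<times> {0}) B'"
    "tact_cover (UNIV \<times> {0}) \<phi> S"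
    using layer_comparisonD[OF cmp clopen_set_UNIV B(1) UNIV_not_empty] B(2)
    unfolding subequiv_def piecewise_equiv_def by blast
  obtain P g \<sigma> where t: "(P, g, \<sigma>) \<in> S" "(x, 0) \<in> P"
    using tact_cover_covers[OF \<phi>(3), of "(x, 0)"] by blast
  have g: "g \<in> carrier G" "\<forall>p\<in>P \<inter> UNIV \<times> {0}. \<phi> p = tact \<alpha> g \<sigma> p"
    using tact_coverD[OF \<phi>(3) t(1)] by blast+
  then have "\<phi> (x, 0) = (\<alpha> g x, \<sigma> 0)"
    using t(2) by (simp add: tact_def)
  moreover have "\<phi> (x, 0) \<in> B'"
    using bij_betwE[OF \<phi>(2)] by simp
  ultimately have "\<alpha> g x \<in> B"
    using \<phi>(1) by auto
  moreover have "\<alpha> g x \<in> closure ?orbit"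
    using g(1) by (intro closure_subset[THEN subsetD]) simp
  ultimately show False
    using B(3) by blast
qed

lemma subequiv_layers_if_layer_comparison:
  fixes D :: "'x set"
  assumes D: "clopen_set D" "D \<noteq> {}" "- D \<noteq> {}" and cmp: layer_comparison
  shows "subequiv (UNIV \<times> {..<n}) (UNIV \<times> {0})"
proof (induction n)
  case 0
  show ?case
    by (simp add: subset_imp_subequiv bounded_clopen_Times_singleton clopen_set_def)
next
  case (Suc n)
  have "subequiv (UNIV \<times> {..<n}) (D \<times> {0})"
    using subequiv_trans[OF Suc.IH layer_comparisonD[OF cmp clopen_set_UNIV D(1) UNIV_not_empty D(2)]] .
  moreover have "subequiv (UNIV \<times> {n}) ((- D) \<times> {0})"
    using subequiv_trans[OF piecewise_equiv_imp_subequiv[OF piecewise_equiv_swap_layers[OF clopen_set_UNIV]]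
        layer_comparisonD[OF cmp clopen_set_UNIV clopen_set_Compl[OF D(1)] UNIV_not_empty D(3)]] .
  ultimately have "subequiv (UNIV \<times> {..<n} \<union> UNIV \<times> {n}) (D \<times> {0} \<union> (- D) \<times> {0})"
    by (rule subequiv_Un) auto
  moreover have "UNIV \<times> {..<n} \<union> UNIV \<times> {n} = (UNIV :: 'x set) \<times> {..<Suc n}"
    by auto
  moreover have "D \<times> {0} \<union> (- D) \<times> {0} = (UNIV :: 'x set) \<times> {0 :: nat}"
    by auto
  ultimately show ?case
    by simp
qed

lemma subequiv_if_layer_comparison:
  fixes D :: "'x set"
  assumes D: "clopen_set D" "D \<noteq> {}" "- D \<noteq> {}" and cmp: layer_comparison
    and A: "bounded_clopen A" and B: "bounded_clopen B" "B \<noteq> {}"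
  shows "subequiv A B"
proof -
  obtain n where "A \<subseteq> UNIV \<times> {..<n}"
    using bounded_clopen_subset_layers[OF A] by blast
  obtain b m where "(b, m) \<in> B"
    using B(2) by auto
  define slice where "slice = {x. (x, m) \<in> B}"
  have slice: "clopen_set slice" "slice \<noteq> {}" "slice \<times> {m} \<subseteq> B"
    unfolding slice_def using B \<open>(b, m) \<in> B\<close> clopen_set_slice unfolding bounded_clopen_def by auto
  have "subequiv A (UNIV \<times> {..<n})"
    using A \<open>A \<subseteq> UNIV \<times> {..<n}\<close> bounded_clopen_Times_lessThan[OF clopen_set_UNIV] subset_imp_subequiv
    unfolding bounded_clopen_def by blast
  also have "subequiv \<dots> (UNIV \<times> {0})"
    by (rule subequiv_layers_if_layer_comparison[OF D cmp])
  also have "subequiv \<dots> (slice \<times> {0})"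
    using layer_comparisonD[OF cmp clopen_set_UNIV slice(1) UNIV_not_empty slice(2)] .
  also have "subequiv \<dots> B"
    unfolding subequiv_def using B(1) slice(3) piecewise_equiv_swap_layers[OF slice(1)] by blast
  finally show ?thesis .
qed

lemma layer_comparison_iff:
  fixes D :: "'x set"
  assumes "zero_dimensional TYPE('x)" and D: "clopen_set D" "D \<noteq> {}" "- D \<noteq> {}"
  shows "layer_comparison \<longleftrightarrow> minimal_action G \<alpha> \<and>
    (\<forall>A B. bounded_clopen A \<and> bounded_clopen B \<and> A \<noteq> {} \<and> B \<noteq> {} \<longrightarrow> subequiv A B)"
proof (intro iffI conjI allI impI)
  assume cmp: layer_comparison
  show "minimal_action G \<alpha>"
    using assms(1) cmp by (rule minimal_if_layer_comparison)
  fix A B :: "('x \<times> nat) set"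
  assume "bounded_clopen A \<and> bounded_clopen B \<and> A \<noteq> {} \<and> B \<noteq> {}"
  then show "subequiv A B"
    using subequiv_if_layer_comparison[OF D cmp] by blast
next
  assume "minimal_action G \<alpha> \<and>
    (\<forall>A B. bounded_clopen A \<and> bounded_clopen B \<and> A \<noteq> {} \<and> B \<noteq> {} \<longrightarrow> subequiv A B)"
  then have "subequiv (A \<times> {0}) (B \<times> {0})"
    if "clopen_set A" "clopen_set B" "A \<noteq> {}" "B \<noteq> {}" for A B
    using that bounded_clopen_Times_singleton by blast
  then show layer_comparison
    unfolding layer_comparison_def by blast
qed

end

theorem lemmal:
  fixes G :: "('g, 'b) monoid_scheme" and \<alpha> :: "'g \<Rightarrow> 'x::t2_space \<Rightarrow> 'x"
  assumes "continuous_action G \<alpha>"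
    and "countable (carrier G)"
    and "compact (UNIV :: 'x set)"
    and "zero_dimensional TYPE('x)"
    and "\<not> (\<exists>\<mu>. inv_radon_prob G \<alpha> \<mu>)"
  shows "dynamical_comparison G \<alpha> \<longleftrightarrow>
    (minimal_action G \<alpha> \<and>
     (\<forall>A B. bounded_clopen A \<and> bounded_clopen B \<and> \<not> type_zero G \<alpha> A \<and> \<not> type_zero G \<alpha> B
        \<longrightarrow> type_le G \<alpha> A B))"
proof -
  interpret clopen_dynamics G \<alpha>
    using assms(1) by unfold_locales
  obtain D :: "'x set" where D: "clopen_set D" "D \<noteq> {}" "- D \<noteq> {}"
    using exists_proper_clopen[OF assms(4)] exists_two_points_if_no_inv_radon_prob[OF assms(5)] by blast
  have "dynamical_comparison G \<alpha> \<longleftrightarrow> layer_comparison"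
    using assms(5) by (simp add: dynamical_comparison_def layer_comparison_def type_le_iff_subequiv)
  then show ?thesis
    using layer_comparison_iff[OF assms(4) D] by (simp add: type_le_iff_subequiv type_zero_iff_empty)
qed

end
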